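(* Let $k\ge 2$ and let $P=(p_1,\dots,p_k)$ and $Q=(q_1,\dots,q_k)$ be two multinomial (categorical) probability distributions over the same index set $\{1,\dots,k\}$. Suppose the indices of the largest probabilities of $P$ and $Q$ do not match, i.e. $\arg\max_i p_i \neq \arg\max_j q_j$. Then $$d_{\chi^2}(Q,P)\;\ge\; \frac{(p_{(1)}-p_{(2)})^2}{(p_{(1)}+p_{(2)})-(p_{(1)}-p_{(2)})^2},$$ where $p_{(1)}$ and $p_{(2)}$ denote the first and second largest probabilities among $p_1,\dots,p_k$.
   Context: The chi-squared distance is $d_{\chi^2}(Q,P)=\sum_{i=1}^k\frac{(q_i-p_i)^2}{p_i}=\sum_{i=1}^k\frac{q_i^2}{p_i}-1$ (taken to be $+\infty$ if some $q_i>0=p_i$). *)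

theory Defs
  imports Complex_Main "HOL-Library.Extended_Real"
begin

definition is_distribution :: "nat \<Rightarrow> (nat \<Rightarrow> real) \<Rightarrow> bool" where
  "is_distribution k p \<longleftrightarrow> (\<forall>i\<in>{1..k}. 0 \<le> p i) \<and> (\<Sum>i=1..k. p i) = 1"

definition chi2_dist :: "nat \<Rightarrow> (nat \<Rightarrow> real) \<Rightarrow> (nat \<Rightarrow> real) \<Rightarrow> ereal" where
  "chi2_dist k q p =
     (if \<exists>i\<in>{1..k}. q i > 0 \<and> p i = 0 then \<infinity>
      else ereal (\<Sum>i\<in>{i\<in>{1..k}. p i \<noteq> 0}. (q i - p i)^2 / p i))"

definition argmax_set :: "nat \<Rightarrow> (nat \<Rightarrow> real) \<Rightarrow> nat set" where
  "argmax_set k p = {i\<in>{1..k}. \<forall>j\<in>{1..k}. p j \<le> p i}"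

text \<open>Order statistics: m-th largest value (m = 1, 2, ...) among p_1..p_k,
  counted with multiplicity.\<close>
definition order_stat :: "nat \<Rightarrow> (nat \<Rightarrow> real) \<Rightarrow> nat \<Rightarrow> real" where
  "order_stat k p m = rev (sort (map p [1..<k+1])) ! (m - 1)"

text \<open>The right-hand side a^2/b as an extended real, with a^2/0 = +infinity
  (only occurs for a point mass P, where the numerator is 1).\<close>
definition ediv :: "real \<Rightarrow> real \<Rightarrow> ereal" where
  "ediv a b = (if b = 0 then (if a = 0 then 0 else \<infinity>) else ereal (a / b))"

end

(* Let i be a most likely index of P and j one of Q, i \<noteq> j.  Testing Q - P against
   the function w = 1{i} - 1{j} - (p_i - p_j), which is centred under P, the Cauchy-Schwarz
   inequality gives  d(Q,P) \<ge> (\<Sum> (q_l - p_l) w_l)^2 / \<Sum> p_l w_l^2.  The numerator is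
   (q_i - q_j - (p_i - p_j))^2 \<ge> (p_i - p_j)^2 because q_i \<le> q_j, and the denominator is the
   variance p_i + p_j - (p_i - p_j)^2.  Finally p_i = p_(1) and p_j \<le> p_(2), and this bound
   only decreases when p_j is raised to p_(2). *)

theory Submission
  imports Defs "HOL-Analysis.Convex"
begin

lemma sorted_nth_ge_if_many_ge:
  fixes xs :: "'a::linorder list"
  assumes "sorted xs" and "1 \<le> m" and "m \<le> length (filter (\<lambda>x. v \<le> x) xs)"
  shows "v \<le> xs ! (length xs - m)"
proof (rule ccontr)
  assume "\<not> v \<le> xs ! (length xs - m)"
  moreover have "length xs - m < length xs"
    using assms(2,3) length_filter_le[of "\<lambda>x. v \<le> x" xs] by linarith
  ultimately have "xs ! n < v" if "n \<le> length xs - m" for n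
    using sorted_nth_mono[OF assms(1) that] by fastforce
  then have "{n. n < length xs \<and> v \<le> xs ! n} \<subseteq> {length xs - m <..< length xs}"
    by (auto simp: not_le[symmetric])
  then have "card {n. n < length xs \<and> v \<le> xs ! n} \<le> m - 1"
    using card_mono[of "{length xs - m <..< length xs}"] assms(2,3) length_filter_le[of "\<lambda>x. v \<le> x" xs]
    by fastforce
  with assms(2,3) show False by (simp add: length_filter_conv_card)
qed

lemma order_stat_eq_nth_sort:
  assumes "1 \<le> m" and "m \<le> k"
  shows "order_stat k p m = sort (map p [1..<k+1]) ! (k - m)"
  using assms by (simp add: order_stat_def rev_nth Suc_diff_le)

lemma order_stat_mem:
  assumes "1 \<le> m" and "m \<le> k"
  shows "order_stat k p m \<in> p ` {1..k}"
proof -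
  have "k - m < length (sort (map p [1..<k+1]))" using assms by simp
  then have "order_stat k p m \<in> set (sort (map p [1..<k+1]))"
    unfolding order_stat_eq_nth_sort[OF assms] by (rule nth_mem)
  then show ?thesis by auto
qed

lemma order_stat_ge:
  assumes "1 \<le> m" and "m \<le> card {l\<in>{1..k}. v \<le> p l}"
  shows "v \<le> order_stat k p m"
proof -
  define xs where "xs = sort (map p [1..<k+1])"
  have "length (filter (\<lambda>x. v \<le> x) xs) = length (filter (\<lambda>l. v \<le> p l) [1..<k+1])"
    by (simp add: xs_def filter_sort filter_map comp_def)
  also have "\<dots> = card ({l. v \<le> p l} \<inter> set [1..<k+1])"
    by (rule distinct_length_filter) simp
  also have "{l. v \<le> p l} \<inter> set [1..<k+1] = {l\<in>{1..k}. v \<le> p l}"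
    by auto
  finally have "length (filter (\<lambda>x. v \<le> x) xs) = card {l\<in>{1..k}. v \<le> p l}" .
  moreover have "card {l\<in>{1..k}. v \<le> p l} \<le> card {1..k}"
    by (rule card_mono) auto
  ultimately show ?thesis
    using sorted_nth_ge_if_many_ge[of xs m v] assms order_stat_eq_nth_sort[of m k p]
    by (simp add: xs_def)
qed

lemma order_stat_1_argmax:
  assumes "i \<in> argmax_set k p"
  shows "order_stat k p 1 = p i"
proof (rule antisym)
  have i: "i \<in> {1..k}" and max: "\<forall>l\<in>{1..k}. p l \<le> p i"
    using assms by (auto simp: argmax_set_def)
  then show "order_stat k p 1 \<le> p i"
    using order_stat_mem[of 1 k p] by auto
  have "0 < card {l\<in>{1..k}. p i \<le> p l}" using i by (auto simp: card_gt_0_iff)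
  then show "p i \<le> order_stat k p 1" by (intro order_stat_ge) auto
qed

lemma order_stat_2_ge_min:
  assumes "i \<in> {1..k}" and "j \<in> {1..k}" and "i \<noteq> j"
  shows "min (p i) (p j) \<le> order_stat k p 2"
proof -
  have "{i, j} \<subseteq> {l\<in>{1..k}. min (p i) (p j) \<le> p l}" using assms by auto
  then have "card {i, j} \<le> card {l\<in>{1..k}. min (p i) (p j) \<le> p l}"
    by (intro card_mono) auto
  then show ?thesis using assms(3) by (intro order_stat_ge) auto
qed

lemma chi2_sum_Cauchy_Schwarz:
  fixes p q w :: "'a \<Rightarrow> real"
  assumes "\<And>l. l \<in> S \<Longrightarrow> 0 < p l"
  shows "(\<Sum>l\<in>S. (q l - p l) * w l)\<^sup>2 \<le> (\<Sum>l\<in>S. (q l - p l)\<^sup>2 / p l) * (\<Sum>l\<in>S. p l * (w l)\<^sup>2)"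
proof -
  have "(\<Sum>l\<in>S. (q l - p l) * w l) = (\<Sum>l\<in>S. (q l - p l) / sqrt (p l) * (sqrt (p l) * w l))"
    by (intro sum.cong refl) (use assms in force)
  moreover have "(\<Sum>l\<in>S. ((q l - p l) / sqrt (p l))\<^sup>2) = (\<Sum>l\<in>S. (q l - p l)\<^sup>2 / p l)"
    using assms by (intro sum.cong) (auto simp: power_divide less_imp_le)
  moreover have "(\<Sum>l\<in>S. (sqrt (p l) * w l)\<^sup>2) = (\<Sum>l\<in>S. p l * (w l)\<^sup>2)"
    using assms by (intro sum.cong) (auto simp: power_mult_distrib less_imp_le)
  ultimately show ?thesis
    using Cauchy_Schwarz_ineq_sum[of "\<lambda>l. (q l - p l) / sqrt (p l)" "\<lambda>l. sqrt (p l) * w l" S]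
    by simp
qed

lemma chi2_sum_ge_swapped_pair:
  fixes p q :: "'a \<Rightarrow> real"
  assumes "finite S" and pos: "\<And>l. l \<in> S \<Longrightarrow> 0 < p l"
    and p_sum: "(\<Sum>l\<in>S. p l) = 1" and q_sum: "(\<Sum>l\<in>S. q l) = 1"
    and "i \<in> S" and "j \<in> S" and "i \<noteq> j" and "p j \<le> p i" and "q i \<le> q j"
  shows "(p i - p j)\<^sup>2 / (p i + p j - (p i - p j)\<^sup>2) \<le> (\<Sum>l\<in>S. (q l - p l)\<^sup>2 / p l)"
proof -
  define d where "d = p i - p j"
  define e where "e l = (if l = i then 1 else 0) - (if l = j then 1 else (0::real))" for l
  define w where "w l = e l - d" for l
  \<comment> \<open>Shifting by d = \<Sum> p e centres w under P, which makes \<Sum> p w^2 as small as possible.\<close>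
  have delta: "(\<Sum>l\<in>S. f l * e l) = f i - f j" for f :: "'a \<Rightarrow> real"
    using assms(1,5,6) by (simp add: e_def right_diff_distrib sum_subtractf if_distrib[of "\<lambda>x. _ * x"] cong: if_cong)
  have cov: "(\<Sum>l\<in>S. (q l - p l) * w l) = (q i - p i) - (q j - p j)"
    using delta[of "\<lambda>l. q l - p l"] p_sum q_sum
    by (simp add: w_def right_diff_distrib sum_subtractf sum_distrib_right[symmetric])
  have "(\<Sum>l\<in>S. p l * (w l)\<^sup>2) = (\<Sum>l\<in>S. p l * e l * e l - 2 * d * (p l * e l) + d\<^sup>2 * p l)"
    by (intro sum.cong refl) (simp add: w_def power2_eq_square algebra_simps)
  also have "\<dots> = (\<Sum>l\<in>S. p l * e l * e l) - 2 * d * (\<Sum>l\<in>S. p l * e l) + d\<^sup>2"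
    using p_sum by (simp add: sum.distrib sum_subtractf sum_distrib_left[symmetric])
  also have "\<dots> = p i + p j - d\<^sup>2"
  proof -
    have "(\<Sum>l\<in>S. p l * e l) = d" using delta[of p] by (simp add: d_def)
    moreover have "(\<Sum>l\<in>S. p l * e l * e l) = p i + p j"
      using delta[of "\<lambda>l. p l * e l"] \<open>i \<noteq> j\<close> by (simp add: e_def[of i] e_def[of j])
    ultimately show ?thesis by (simp add: power2_eq_square)
  qed
  finally have var: "(\<Sum>l\<in>S. p l * (w l)\<^sup>2) = p i + p j - d\<^sup>2" .
  have "d\<^sup>2 \<le> ((q i - p i) - (q j - p j))\<^sup>2"
    using power_mono[of d "(q j - p j) - (q i - p i)" 2] assms(8,9)
    by (simp add: d_def power2_commute)
  also have "\<dots> \<le> (\<Sum>l\<in>S. (q l - p l)\<^sup>2 / p l) * (p i + p j - d\<^sup>2)"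
    using chi2_sum_Cauchy_Schwarz[of S p q w] pos cov var by simp
  finally have "d\<^sup>2 \<le> (\<Sum>l\<in>S. (q l - p l)\<^sup>2 / p l) * (p i + p j - d\<^sup>2)" .
  moreover have "0 \<le> (\<Sum>l\<in>S. (q l - p l)\<^sup>2 / p l)"
    using pos by (intro sum_nonneg) (simp add: less_imp_le)
  moreover have "0 \<le> p i + p j - d\<^sup>2"
    unfolding var[symmetric] using pos by (intro sum_nonneg) (simp add: less_imp_le)
  ultimately show ?thesis
    unfolding d_def[symmetric] by (auto simp: divide_le_eq)
qed

lemma chi2_dist_ge_swapped_pair:
  assumes p: "is_distribution k p" and q: "is_distribution k q"
    and "i \<in> {1..k}" and "j \<in> {1..k}" and "i \<noteq> j"
    and "0 < p j" and "p j \<le> p i" and "q i \<le> q j"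
  shows "ereal ((p i - p j)\<^sup>2 / (p i + p j - (p i - p j)\<^sup>2)) \<le> chi2_dist k q p"
proof (cases "\<exists>l\<in>{1..k}. q l > 0 \<and> p l = 0")
  case True
  then show ?thesis by (simp add: chi2_dist_def)
next
  case False
  define S where "S = {l\<in>{1..k}. p l \<noteq> 0}"
  have pos: "0 < p l" if "l \<in> S" for l
    using that p by (force simp: S_def is_distribution_def)
  have "(\<Sum>l\<in>S. p l) = (\<Sum>l=1..k. p l)"
    by (rule sum.mono_neutral_left) (auto simp: S_def)
  moreover have "(\<Sum>l\<in>S. q l) = (\<Sum>l=1..k. q l)"
    using False q by (intro sum.mono_neutral_left) (force simp: S_def is_distribution_def)+
  ultimately have "(\<Sum>l\<in>S. p l) = 1" and "(\<Sum>l\<in>S. q l) = 1"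
    using p q by (simp_all add: is_distribution_def)
  moreover have "i \<in> S" and "j \<in> S" using assms(3-7) by (auto simp: S_def)
  ultimately show ?thesis
    using chi2_sum_ge_swapped_pair[of S p q i j] pos assms(5,7,8) False
    by (simp add: chi2_dist_def S_def)
qed

lemma ediv_gap_ratio_antimono:
  fixes a b c :: real
  assumes "0 < c" and "c \<le> b" and "b \<le> a" and "a \<le> 1"
  shows "ediv ((a - b)\<^sup>2) (a + b - (a - b)\<^sup>2) \<le> ereal ((a - c)\<^sup>2 / (a + c - (a - c)\<^sup>2))"
proof -
  have "(a - c)\<^sup>2 \<le> a - c"
    using assms mult_left_le[of "a - c" "a - c"] by (simp add: power2_eq_square)
  then have pos: "0 < a + c - (a - c)\<^sup>2" using assms(1) by linarith
  have sq: "(a - b)\<^sup>2 \<le> (a - c)\<^sup>2" using assms by (intro power_mono) auto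
  then have le: "a + c - (a - c)\<^sup>2 \<le> a + b - (a - b)\<^sup>2" using assms(2) by linarith
  have "(a - b)\<^sup>2 / (a + b - (a - b)\<^sup>2) \<le> (a - c)\<^sup>2 / (a + c - (a - c)\<^sup>2)"
    using sq pos le by (intro frac_le) auto
  with pos le show ?thesis by (simp add: ediv_def)
qed

lemma distribution_le_1:
  assumes "is_distribution k p" and "i \<in> {1..k}"
  shows "p i \<le> 1"
  using assms member_le_sum[of i "{1..k}" p] by (auto simp: is_distribution_def)

lemma argmax_distribution_pos:
  assumes "is_distribution k q" and "j \<in> argmax_set k q"
  shows "0 < q j"
proof (rule ccontr)
  assume "\<not> 0 < q j"
  with assms(2) have "(\<Sum>l=1..k. q l) \<le> (\<Sum>l=1..k. 0)"
    by (intro sum_mono) (force simp: argmax_set_def)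
  with assms(1) show False by (simp add: is_distribution_def)
qed

theorem mainTheorem3:
  fixes k :: nat and p q :: "nat \<Rightarrow> real"
  assumes "k \<ge> 2"
    and "is_distribution k p" and "is_distribution k q"
    and "\<exists>i\<in>argmax_set k p. \<exists>j\<in>argmax_set k q. i \<noteq> j"
  shows "chi2_dist k q p \<ge>
           ediv ((order_stat k p 1 - order_stat k p 2)^2)
                ((order_stat k p 1 + order_stat k p 2) - (order_stat k p 1 - order_stat k p 2)^2)"
proof -
  obtain i j where i: "i \<in> argmax_set k p" and j: "j \<in> argmax_set k q" and "i \<noteq> j"
    using assms(4) by blast
  then have "i \<in> {1..k}" and "j \<in> {1..k}" and "q i \<le> q j"
    and p_max: "\<forall>l\<in>{1..k}. p l \<le> p i" by (auto simp: argmax_set_def)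
  define b where "b = order_stat k p 2"
  have "p j \<le> b"
    using order_stat_2_ge_min[OF \<open>i \<in> {1..k}\<close> \<open>j \<in> {1..k}\<close> \<open>i \<noteq> j\<close>, of p] p_max \<open>j \<in> {1..k}\<close>
    by (simp add: b_def min_absorb2)
  have "b \<le> p i" using order_stat_mem[of 2 k p] assms(1) p_max by (auto simp: b_def)
  have "ediv ((p i - b)\<^sup>2) (p i + b - (p i - b)\<^sup>2) \<le> chi2_dist k q p"
  proof (cases "p j = 0")
    case True
    with argmax_distribution_pos[OF assms(3) j] \<open>j \<in> {1..k}\<close> show ?thesis
      by (auto simp: chi2_dist_def)
  next
    case False
    with assms(2) \<open>j \<in> {1..k}\<close> have "0 < p j" by (force simp: is_distribution_def)
    then have "ediv ((p i - b)\<^sup>2) (p i + b - (p i - b)\<^sup>2)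
        \<le> ereal ((p i - p j)\<^sup>2 / (p i + p j - (p i - p j)\<^sup>2))"
      using \<open>p j \<le> b\<close> \<open>b \<le> p i\<close> distribution_le_1[OF assms(2) \<open>i \<in> {1..k}\<close>]
      by (rule ediv_gap_ratio_antimono)
    also have "\<dots> \<le> chi2_dist k q p"
      using \<open>0 < p j\<close> p_max \<open>i \<in> {1..k}\<close> \<open>j \<in> {1..k}\<close> \<open>i \<noteq> j\<close> \<open>q i \<le> q j\<close>
      by (intro chi2_dist_ge_swapped_pair assms(2,3)) auto
    finally show ?thesis .
  qed
  then show ?thesis unfolding order_stat_1_argmax[OF i] b_def .
qed

end
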